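(* Let $s_1\ge0$, $s_2\le s_1+2$ and $s_2<2s_1+3/2$. Then for all $u_0\in H^{s_1}(\mathbb{R})$, $$\|B(u_0)\|_{H^{s_2}}\lesssim\|u_0\|_{H^{s_1}}^2.$$
   Context: Fourier transform $\hat f(\xi)=(2\pi)^{-1/2}\int f(x)e^{-ix\xi}dx$. Dyadic $N\in\{1,2,4,\dots\}$; $\varphi$ even smooth, $=1$ on $[-1,1]$, $=0$ outside $[-5/4,5/4]$; $\psi_1=\varphi$, $\psi_N=\varphi(\cdot/N)-\varphi(\cdot/(N/2))$ for $N\ge2$. Fix a sufficiently large dyadic constant $C$ and write $N_1\sim N^2$ if $N^2/C\le N_1\le CN^2$, $N_1\nsim N^2$ otherwise. Define, with $\xi_2=\xi-\xi_1$, $$M(\xi,\xi_1)=\frac{1}{(2\pi)^{1/2}}\sum_{N_1\nsim N^2}\frac{\psi_{N_1}(\xi_1)\psi_N(\xi)}{\xi^3-\xi_1^2+\xi_2^2},$$ $T_M(f,g)=\mathscr{F}^{-1}_\xi\big(\int_{\mathbb{R}}M(\xi,\xi_1)\hat f(\xi_1)\widehat{\bar g}(\xi-\xi_1)\,d\xi_1\big)$, and $B(u_0)=-\partial_xT_M(u_0,u_0)$. *)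

theory Defs
  imports "HOL-Analysis.Analysis"
begin

definition phi_ok :: "(real \<Rightarrow> real) \<Rightarrow> bool" where
  "phi_ok \<phi> \<longleftrightarrow>
     (\<forall>k x. ((deriv ^^ k) \<phi>) differentiable (at x)) \<and>
     (\<forall>x. \<phi> (- x) = \<phi> x) \<and>
     (\<forall>x. \<bar>x\<bar> \<le> 1 \<longrightarrow> \<phi> x = 1) \<and>
     (\<forall>x. \<bar>x\<bar> > 5/4 \<longrightarrow> \<phi> x = 0)"

definition psi :: "(real \<Rightarrow> real) \<Rightarrow> nat \<Rightarrow> real \<Rightarrow> real" where
  "psi \<phi> k \<xi> = (if k = 0 then \<phi> \<xi>
      else \<phi> (\<xi> / 2 ^ k) - \<phi> (\<xi> / (2 ^ k / 2)))"

text \<open>N1 ~ N^2 with dyadic constant C = 2^c, N = 2^k, N1 = 2^k1.\<close>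
definition dsim :: "nat \<Rightarrow> nat \<Rightarrow> nat \<Rightarrow> bool" where
  "dsim c k k1 \<longleftrightarrow> (2::real) ^ k * 2 ^ k / 2 ^ c \<le> 2 ^ k1 \<and>
                      (2::real) ^ k1 \<le> 2 ^ c * (2 ^ k * 2 ^ k)"

definition Mmult :: "(real \<Rightarrow> real) \<Rightarrow> nat \<Rightarrow> real \<Rightarrow> real \<Rightarrow> real" where
  "Mmult \<phi> c \<xi> \<xi>1 = (1 / sqrt (2 * pi)) *
     infsum (\<lambda>(k, k1). psi \<phi> k1 \<xi>1 * psi \<phi> k \<xi> /
                       (\<xi> ^ 3 - \<xi>1 ^ 2 + (\<xi> - \<xi>1) ^ 2))
            {(k, k1). \<not> dsim c k k1}"

text \<open>Fourier transform of B(u0) expressed through v = Fourier transform of u0: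
  hat(B u0)(xi) = - i xi * int M(xi,xi1) v(xi1) hat(conj u0)(xi - xi1) dxi1,
  where hat(conj u0)(eta) = cnj (v (- eta)).\<close>
definition Bhat :: "(real \<Rightarrow> real) \<Rightarrow> nat \<Rightarrow> (real \<Rightarrow> complex) \<Rightarrow> real \<Rightarrow> complex" where
  "Bhat \<phi> c v \<xi> = - \<i> * complex_of_real \<xi> *
     (LINT \<xi>1|lborel. complex_of_real (Mmult \<phi> c \<xi> \<xi>1) * v \<xi>1 * cnj (v (\<xi>1 - \<xi>)))"

definition Hs_sq :: "real \<Rightarrow> (real \<Rightarrow> complex) \<Rightarrow> ennreal" where
  "Hs_sq s v = (\<integral>\<^sup>+ \<xi>. ennreal ((1 + \<xi>\<^sup>2) powr s * (cmod (v \<xi>))\<^sup>2) \<partial>lborel)"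

end

theory Submission
  imports Defs
begin

(* Since xi^3 - xi1^2 + (xi - xi1)^2 = xi (xi^2 + xi - 2 xi1), the factor xi is cancelled by the
   derivative in B, and away from the resonance N1 ~ N^2 the remaining factor is comparable to
   1 + xi^2 + |xi1|: if N1 >> N^2 the term 2 xi1 dominates, if N1 << N^2 the term xi^2 does.
   Hence |xi M(xi, xi1)| <~ (1 + xi^2 + |xi1|)^-1, and the H^s2 norm of B(u0) is controlled by a
   bilinear operator with an explicit positive kernel acting on <xi>^s1 |u0^|.  Splitting the kernel
   according to which input frequency, xi1 or xi1 - xi, is smaller, Cauchy-Schwarz and Fubini reduce
   the estimate to a pointwise bound of the squared kernel by <xi>^-2q + <smaller frequency>^-2q;
   such a bound with an integrable q > 1/2 exists precisely when s2 <= s1 + 2 and s2 < 2 s1 + 3/2. *)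

section \<open>Littlewood-Paley pieces\<close>

lemma phi_ok_continuous:
  assumes "phi_ok \<phi>"
  shows "continuous_on UNIV \<phi>"
proof -
  have "\<forall>x. \<phi> differentiable (at x)"
    using assms unfolding phi_ok_def by (metis funpow_0)
  then show ?thesis
    by (meson continuous_at_imp_continuous_on differentiable_imp_continuous_within)
qed

lemma phi_ok_borel_measurable: "phi_ok \<phi> \<Longrightarrow> \<phi> \<in> borel_measurable borel"
  by (rule borel_measurable_continuous_onI[OF phi_ok_continuous])

lemma phi_ok_bounded:
  assumes "phi_ok \<phi>"
  obtains B where "\<And>x. \<bar>\<phi> x\<bar> \<le> B"
proof -
  have "compact (\<phi> ` {-5/4..5/4})"
    by (rule compact_continuous_image)
      (auto intro: continuous_on_subset[OF phi_ok_continuous[OF assms]])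
  then obtain B where B: "\<And>y. y \<in> \<phi> ` {-5/4..5/4} \<Longrightarrow> norm y \<le> B"
    by (meson bounded_iff compact_imp_bounded)
  have "\<bar>\<phi> x\<bar> \<le> B" for x
  proof (cases "\<bar>x\<bar> > 5/4")
    case True
    then have "\<phi> x = 0"
      using assms unfolding phi_ok_def by auto
    moreover have "norm (\<phi> 0) \<le> B"
      by (intro B) auto
    ultimately show ?thesis by simp
  next
    case False
    then have "x \<in> {-5/4..5/4}"
      by auto
    then show ?thesis
      using B[OF imageI] by auto
  qed
  then show ?thesis
    using that by blast
qed

lemma psi_nonzero_range:
  assumes "phi_ok \<phi>" and "psi \<phi> k t \<noteq> 0"
  shows "\<bar>t\<bar> \<le> 5/4 * 2^k" and "k = 0 \<or> 2^k < 2 * \<bar>t\<bar>"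
proof -
  have one: "\<And>x. \<bar>x\<bar> \<le> 1 \<Longrightarrow> \<phi> x = 1" and zero: "\<And>x. \<bar>x\<bar> > 5/4 \<Longrightarrow> \<phi> x = 0"
    using assms(1) unfolding phi_ok_def by auto
  have "\<bar>t\<bar> \<le> 5/4 * 2^k \<and> (k = 0 \<or> 2^k < 2 * \<bar>t\<bar>)"
  proof (cases "k = 0")
    case True
    then have "\<phi> t \<noteq> 0"
      using assms(2) by (simp add: psi_def)
    then show ?thesis
      using zero True by force
  next
    case False
    then have nz: "\<phi> (t / 2^k) \<noteq> \<phi> (t / (2^k / 2))"
      using assms(2) by (simp add: psi_def)
    have scale: "\<bar>t / 2^k\<bar> = \<bar>t\<bar> / 2^k" "\<bar>t / (2^k / 2)\<bar> = 2 * \<bar>t\<bar> / 2^k"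
      by (simp_all add: abs_divide)
    have "\<bar>t\<bar> \<le> 5/4 * 2^k"
    proof (rule ccontr)
      assume "\<not> ?thesis"
      then have "\<bar>t\<bar> / 2^k > 5/4" "2 * \<bar>t\<bar> / 2^k > 5/4"
        by (simp_all add: field_simps)
      then show False
        using nz zero scale by auto
    qed
    moreover have "2^k < 2 * \<bar>t\<bar>"
    proof (rule ccontr)
      assume "\<not> ?thesis"
      then have "\<bar>t\<bar> / 2^k \<le> 1" "2 * \<bar>t\<bar> / 2^k \<le> 1"
        by (simp_all add: field_simps)
      then show False
        using nz one scale by auto
    qed
    ultimately show ?thesis by simp
  qed
  then show "\<bar>t\<bar> \<le> 5/4 * 2^k" and "k = 0 \<or> 2^k < 2 * \<bar>t\<bar>"
    by auto
qed

lemma abs_psi_le: "\<bar>psi \<phi> k t\<bar> \<le> 2 * B" if "\<And>x. \<bar>\<phi> x\<bar> \<le> B"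
  using that[of t] that[of "t / 2^k"] that[of "t / (2^k / 2)"] unfolding psi_def by auto

lemma psi_borel_measurable:
  assumes "phi_ok \<phi>"
  shows "psi \<phi> k \<in> borel_measurable borel"
proof -
  have [measurable]: "\<phi> \<in> borel_measurable borel"
    by (rule phi_ok_borel_measurable[OF assms])
  show ?thesis
    unfolding psi_def by measurable
qed

definition psi_indices :: "(real \<Rightarrow> real) \<Rightarrow> real \<Rightarrow> nat set" where
  "psi_indices \<phi> t = {k. psi \<phi> k t \<noteq> 0}"

lemma psi_indices_subset:
  assumes "phi_ok \<phi>"
  shows "psi_indices \<phi> t \<subseteq> {..nat \<lceil>2 * \<bar>t\<bar>\<rceil>}"
proof
  fix k
  assume "k \<in> psi_indices \<phi> t"
  then have "k = 0 \<or> 2^k < 2 * \<bar>t\<bar>"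
    using psi_nonzero_range(2)[OF assms] by (auto simp: psi_indices_def)
  moreover have "real k < 2^k"
    by (metis less_exp of_nat_less_iff of_nat_numeral of_nat_power)
  ultimately have "real k \<le> 2 * \<bar>t\<bar>"
    by (cases "k = 0") (simp, linarith)
  then have "\<lceil>real k\<rceil> \<le> \<lceil>2 * \<bar>t\<bar>\<rceil>"
    by (rule ceiling_mono)
  then show "k \<in> {..nat \<lceil>2 * \<bar>t\<bar>\<rceil>}"
    by (simp add: le_nat_iff)
qed

lemma finite_psi_indices: "phi_ok \<phi> \<Longrightarrow> finite (psi_indices \<phi> t)"
  using psi_indices_subset finite_subset by blast

lemma psi_indices_consecutive:
  assumes "phi_ok \<phi>" "k \<in> psi_indices \<phi> t" "j \<in> psi_indices \<phi> t" "k < j"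
  shows "j = k + 1"
proof -
  have "\<bar>t\<bar> \<le> 5/4 * 2^k"
    using psi_nonzero_range(1)[OF assms(1)] assms(2) by (auto simp: psi_indices_def)
  moreover have "2^j < 2 * \<bar>t\<bar>"
    using psi_nonzero_range(2)[OF assms(1)] assms(3,4) by (auto simp: psi_indices_def)
  ultimately have "(2::real)^j < 2^(k + 2)"
    by simp
  then have "j < k + 2"
    by (rule power_less_imp_less_exp[rotated]) simp
  then show ?thesis
    using assms(4) by simp
qed

lemma sum_abs_psi_le:
  assumes "phi_ok \<phi>" and B: "\<And>x. \<bar>\<phi> x\<bar> \<le> B"
  shows "(\<Sum>k\<in>psi_indices \<phi> t. \<bar>psi \<phi> k t\<bar>) \<le> 4 * B"
proof (cases "psi_indices \<phi> t = {}")
  case True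
  then show ?thesis
    using B[of 0] by simp
next
  case False
  define m where "m = Min (psi_indices \<phi> t)"
  have fin: "finite (psi_indices \<phi> t)"
    using finite_psi_indices[OF assms(1)] .
  have m: "m \<in> psi_indices \<phi> t"
    using Min_in[OF fin False] m_def by simp
  have "psi_indices \<phi> t \<subseteq> {m, m + 1}"
  proof
    fix j
    assume j: "j \<in> psi_indices \<phi> t"
    have "m \<le> j"
      using Min_le[OF fin j] m_def by simp
    then show "j \<in> {m, m + 1}"
      using psi_indices_consecutive[OF assms(1) m j] by (cases "m = j") auto
  qed
  then have "(\<Sum>k\<in>psi_indices \<phi> t. \<bar>psi \<phi> k t\<bar>) \<le> (\<Sum>k\<in>{m, m + 1}. \<bar>psi \<phi> k t\<bar>)"
    by (intro sum_mono2) auto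
  also have "\<dots> \<le> 2 * B + 2 * B"
    using abs_psi_le[of \<phi> B m t, OF B] abs_psi_le[of \<phi> B "m + 1" t, OF B] by simp
  finally show ?thesis
    by simp
qed

section \<open>The multiplier away from the resonance\<close>

definition nonres_indices :: "(real \<Rightarrow> real) \<Rightarrow> nat \<Rightarrow> real \<Rightarrow> real \<Rightarrow> (nat \<times> nat) set" where
  "nonres_indices \<phi> c \<xi> \<xi>1 =
     {(k, k1). \<not> dsim c k k1} \<inter> (psi_indices \<phi> \<xi> \<times> psi_indices \<phi> \<xi>1)"

lemma finite_nonres_indices: "phi_ok \<phi> \<Longrightarrow> finite (nonres_indices \<phi> c \<xi> \<xi>1)"
  unfolding nonres_indices_def using finite_psi_indices by auto

lemma Mmult_eq_sum:
  assumes "phi_ok \<phi>"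
  shows "Mmult \<phi> c \<xi> \<xi>1 = (1 / sqrt (2 * pi)) *
           (\<Sum>(k, k1)\<in>nonres_indices \<phi> c \<xi> \<xi>1.
              psi \<phi> k1 \<xi>1 * psi \<phi> k \<xi> / (\<xi>^3 - \<xi>1^2 + (\<xi> - \<xi>1)^2))"
proof -
  have "infsum (\<lambda>(k, k1). psi \<phi> k1 \<xi>1 * psi \<phi> k \<xi> / (\<xi>^3 - \<xi>1^2 + (\<xi> - \<xi>1)^2))
            {(k, k1). \<not> dsim c k k1}
      = infsum (\<lambda>(k, k1). psi \<phi> k1 \<xi>1 * psi \<phi> k \<xi> / (\<xi>^3 - \<xi>1^2 + (\<xi> - \<xi>1)^2))
            (nonres_indices \<phi> c \<xi> \<xi>1)"
    by (rule infsum_cong_neutral) (auto simp: nonres_indices_def psi_indices_def)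
  then show ?thesis
    unfolding Mmult_def using finite_nonres_indices[OF assms] by simp
qed

lemma Mmult_borel_measurable:
  assumes "phi_ok \<phi>"
  shows "(\<lambda>p. Mmult \<phi> c (fst p) (snd p)) \<in> borel_measurable borel"
proof (rule borel_measurable_LIMSEQ_real)
  define S where "S = {(k::nat, k1::nat). \<not> dsim c k k1}"
  define g where "g = (\<lambda>(i::nat \<times> nat) (\<xi>::real) (\<xi>1::real).
    psi \<phi> (snd i) \<xi>1 * psi \<phi> (fst i) \<xi> / (\<xi>^3 - \<xi>1^2 + (\<xi> - \<xi>1)^2))"
  define u where "u = (\<lambda>n (p::real \<times> real).
    (1 / sqrt (2 * pi)) * (\<Sum>i\<in>S \<inter> ({..n} \<times> {..n}). g i (fst p) (snd p)))"
  have [measurable]: "psi \<phi> k \<in> borel_measurable borel" for k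
    by (rule psi_borel_measurable[OF assms])
  show "u n \<in> borel_measurable borel" for n
    unfolding u_def g_def borel_prod[symmetric] by measurable
  show "(\<lambda>n. u n p) \<longlonglongrightarrow> Mmult \<phi> c (fst p) (snd p)" for p
  proof (rule tendsto_eventually)
    obtain \<xi> \<xi>1 where p: "p = (\<xi>, \<xi>1)"
      by (cases p)
    have "u n p = Mmult \<phi> c (fst p) (snd p)"
      if "nat \<lceil>2 * \<bar>\<xi>\<bar>\<rceil> + nat \<lceil>2 * \<bar>\<xi>1\<bar>\<rceil> \<le> n" for n
    proof -
      have "nonres_indices \<phi> c \<xi> \<xi>1 \<subseteq> S \<inter> ({..n} \<times> {..n})"
        using psi_indices_subset[OF assms, of \<xi>] psi_indices_subset[OF assms, of \<xi>1] that
        unfolding nonres_indices_def S_def by auto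
      then have "(\<Sum>i\<in>S \<inter> ({..n} \<times> {..n}). g i \<xi> \<xi>1) = (\<Sum>i\<in>nonres_indices \<phi> c \<xi> \<xi>1. g i \<xi> \<xi>1)"
        by (intro sum.mono_neutral_right)
          (auto simp: g_def nonres_indices_def S_def psi_indices_def)
      then show ?thesis
        unfolding u_def p Mmult_eq_sum[OF assms] g_def by (simp add: case_prod_unfold)
    qed
    then show "\<forall>\<^sub>F n in sequentially. u n p = Mmult \<phi> c (fst p) (snd p)"
      unfolding eventually_sequentially by blast
  qed
qed

lemma measurable_Mmult [measurable (raw)]:
  assumes "phi_ok \<phi>" "f \<in> borel_measurable M" "g \<in> borel_measurable M"
  shows "(\<lambda>t. Mmult \<phi> c (f t) (g t)) \<in> borel_measurable M"
proof -
  have "(\<lambda>t. (f t, g t)) \<in> measurable M borel"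
    using assms(2,3) by (simp add: borel_prod[symmetric])
  from measurable_compose[OF this Mmult_borel_measurable[OF assms(1)]] show ?thesis
    by simp
qed

lemma resonance_function_eq: "\<xi>^3 - \<xi>1^2 + (\<xi> - \<xi>1)^2 = \<xi> * (\<xi>^2 + \<xi> - 2 * \<xi>1)"
  for \<xi> \<xi>1 :: real
  by (simp add: algebra_simps power2_eq_square power3_eq_cube)

lemma nonres_lower_bound_high:
  fixes x y p p1 :: real
  assumes x: "\<bar>x\<bar> \<le> 5/4 * p" and p: "1 \<le> p" and y: "p1 < 2 * \<bar>y\<bar>" and pp1: "64 * p^2 \<le> p1"
  shows "1 + x^2 + \<bar>y\<bar> \<le> 4 * \<bar>x^2 + x - 2 * y\<bar>"
proof -
  have "x^2 \<le> (5/4 * p)^2"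
    using power_mono[OF x abs_ge_zero, of 2] by simp
  also have "\<dots> = 25/16 * p^2"
    by (simp add: power2_eq_square)
  finally have "x^2 \<le> 25/16 * p^2" .
  moreover have "p \<le> p^2"
    using mult_left_mono[OF p, of p] p by (simp add: power2_eq_square)
  ultimately have "1 + 5 * x^2 + 4 * \<bar>x\<bar> \<le> 7 * \<bar>y\<bar>"
    using x p y pp1 by linarith
  moreover have "2 * \<bar>y\<bar> - x^2 - \<bar>x\<bar> \<le> \<bar>x^2 + x - 2 * y\<bar>"
    using zero_le_power2[of x] by arith
  ultimately show ?thesis
    by argo
qed

lemma nonres_lower_bound_low:
  fixes x y p p1 :: real
  assumes x: "p < 2 * \<bar>x\<bar>" and p: "0 \<le> p" and y: "\<bar>y\<bar> \<le> 5/4 * p1" and pp1: "64 * p1 \<le> p^2"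
    and p1: "1 \<le> p1"
  shows "1 + x^2 + \<bar>y\<bar> \<le> 4 * \<bar>x^2 + x - 2 * y\<bar>"
proof -
  have "p^2 < 4 * x^2"
    using power_strict_mono[OF x p, of 2] by (simp add: power_mult_distrib)
  then have "16 < x^2"
    using pp1 p1 by linarith
  then have x4: "4 < \<bar>x\<bar>"
    using abs_le_square_iff[of x 4] by auto
  then have "4 * \<bar>x\<bar> < \<bar>x\<bar> * \<bar>x\<bar>"
    by (intro mult_strict_right_mono) auto
  then have "4 * \<bar>x\<bar> < x^2"
    by (simp add: power2_eq_square)
  then have "1 + 4 * \<bar>x\<bar> + 9 * \<bar>y\<bar> \<le> 3 * x^2"
    using \<open>p^2 < 4 * x^2\<close> \<open>16 < x^2\<close> y pp1 by linarith
  moreover have "x^2 - \<bar>x\<bar> - 2 * \<bar>y\<bar> \<le> \<bar>x^2 + x - 2 * y\<bar>"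
    using zero_le_power2[of x] by arith
  ultimately show ?thesis
    by argo
qed

lemma nonres_lower_bound:
  assumes "phi_ok \<phi>" "6 \<le> c" "psi \<phi> k \<xi> \<noteq> 0" "psi \<phi> k1 \<xi>1 \<noteq> 0" "\<not> dsim c k k1"
  shows "1 + \<xi>^2 + \<bar>\<xi>1\<bar> \<le> 4 * \<bar>\<xi>^2 + \<xi> - 2 * \<xi>1\<bar>"
proof -
  define p :: real where "p = 2^k"
  define p1 :: real where "p1 = 2^k1"
  define C :: real where "C = 2^c"
  have "(2::real)^6 \<le> 2^c"
    using assms(2) by (rule power_increasing) simp
  then have C: "64 \<le> C"
    by (simp add: C_def)
  have p: "1 \<le> p" "1 \<le> p1"
    by (simp_all add: p_def p1_def)
  note \<xi> = psi_nonzero_range[OF assms(1,3), folded p_def]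
  note \<xi>1 = psi_nonzero_range[OF assms(1,4), folded p1_def]
  have "p1 < p^2 / C \<or> C * p^2 < p1"
    using assms(5) by (auto simp: dsim_def p_def p1_def C_def power2_eq_square not_le)
  then show ?thesis
  proof
    assume low: "p1 < p^2 / C"
    have "64 * p1 \<le> C * p1"
      using C p by (intro mult_right_mono) auto
    also have "\<dots> < p^2"
      using low C by (simp add: field_simps)
    finally have pp1: "64 * p1 < p^2" .
    have "k \<noteq> 0"
    proof
      assume "k = 0"
      then show False
        using pp1 p by (simp add: p_def)
    qed
    then have "p < 2 * \<bar>\<xi>\<bar>"
      using \<xi>(2) by simp
    then show ?thesis
      using nonres_lower_bound_low \<xi>1(1) p pp1 by simp
  next
    assume high: "C * p^2 < p1"
    have "64 * p^2 \<le> C * p^2"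
      using C by (intro mult_right_mono) auto
    then have pp1: "64 * p^2 < p1"
      using high by simp
    have "k1 \<noteq> 0"
    proof
      assume "k1 = 0"
      moreover have "1 \<le> p^2"
        using p by simp
      ultimately show False
        using pp1 by (simp add: p1_def)
    qed
    then have "p1 < 2 * \<bar>\<xi>1\<bar>"
      using \<xi>1(2) by simp
    then show ?thesis
      using nonres_lower_bound_high \<xi>(1) p pp1 by simp
  qed
qed

lemma abs_mult_nonres_term_le:
  assumes "phi_ok \<phi>" "6 \<le> c" "(k, k1) \<in> nonres_indices \<phi> c \<xi> \<xi>1"
  shows "\<bar>\<xi> * (psi \<phi> k1 \<xi>1 * psi \<phi> k \<xi> / (\<xi>^3 - \<xi>1^2 + (\<xi> - \<xi>1)^2))\<bar>
    \<le> 4 / (1 + \<xi>^2 + \<bar>\<xi>1\<bar>) * (\<bar>psi \<phi> k1 \<xi>1\<bar> * \<bar>psi \<phi> k \<xi>\<bar>)"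
proof -
  define D where "D = 1 + \<xi>^2 + \<bar>\<xi>1\<bar>"
  have D: "0 < D"
    unfolding D_def by (simp add: add_pos_nonneg)
  show ?thesis
  proof (cases "\<xi> = 0")
    case True
    then show ?thesis
      using D by (simp add: D_def)
  next
    case False
    have "psi \<phi> k \<xi> \<noteq> 0" "psi \<phi> k1 \<xi>1 \<noteq> 0" "\<not> dsim c k k1"
      using assms(3) by (auto simp: nonres_indices_def psi_indices_def)
    then have E: "D / 4 \<le> \<bar>\<xi>^2 + \<xi> - 2 * \<xi>1\<bar>"
      using nonres_lower_bound[OF assms(1,2)] D_def by fastforce
    have "\<bar>\<xi> * (psi \<phi> k1 \<xi>1 * psi \<phi> k \<xi> / (\<xi>^3 - \<xi>1^2 + (\<xi> - \<xi>1)^2))\<bar>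
        = \<bar>psi \<phi> k1 \<xi>1\<bar> * \<bar>psi \<phi> k \<xi>\<bar> / \<bar>\<xi>^2 + \<xi> - 2 * \<xi>1\<bar>"
      using False by (simp add: resonance_function_eq abs_mult abs_divide)
    also have "\<dots> \<le> \<bar>psi \<phi> k1 \<xi>1\<bar> * \<bar>psi \<phi> k \<xi>\<bar> / (D / 4)"
      using E D by (intro divide_left_mono mult_pos_pos) auto
    also have "\<dots> = 4 / D * (\<bar>psi \<phi> k1 \<xi>1\<bar> * \<bar>psi \<phi> k \<xi>\<bar>)"
      by simp
    finally show ?thesis
      unfolding D_def[symmetric] .
  qed
qed

lemma sum_abs_psi_times_le:
  assumes "phi_ok \<phi>" and B: "\<And>x. \<bar>\<phi> x\<bar> \<le> B"
  shows "(\<Sum>k\<in>psi_indices \<phi> \<xi>. \<Sum>k1\<in>psi_indices \<phi> \<xi>1. \<bar>psi \<phi> k \<xi>\<bar> * \<bar>psi \<phi> k1 \<xi>1\<bar>) \<le> 16 * B^2"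
proof -
  have "(\<Sum>k\<in>psi_indices \<phi> \<xi>. \<Sum>k1\<in>psi_indices \<phi> \<xi>1. \<bar>psi \<phi> k \<xi>\<bar> * \<bar>psi \<phi> k1 \<xi>1\<bar>)
      = (\<Sum>k\<in>psi_indices \<phi> \<xi>. \<bar>psi \<phi> k \<xi>\<bar>) * (\<Sum>k1\<in>psi_indices \<phi> \<xi>1. \<bar>psi \<phi> k1 \<xi>1\<bar>)"
    by (simp add: sum_product)
  also have "\<dots> \<le> (4 * B) * (4 * B)"
    using sum_abs_psi_le[OF assms] B[of 0] by (intro mult_mono) (auto intro: sum_nonneg)
  finally show ?thesis
    by (simp add: power2_eq_square)
qed

lemma abs_mult_Mmult_le:
  assumes phi: "phi_ok \<phi>" and B: "\<And>x. \<bar>\<phi> x\<bar> \<le> B" and c: "6 \<le> c"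
  shows "\<bar>\<xi>\<bar> * \<bar>Mmult \<phi> c \<xi> \<xi>1\<bar> \<le> 64 * B^2 / (1 + \<xi>^2 + \<bar>\<xi>1\<bar>)"
proof -
  define D where "D = 1 + \<xi>^2 + \<bar>\<xi>1\<bar>"
  have D: "0 < D"
    unfolding D_def by (simp add: add_pos_nonneg)
  define g where "g = (\<lambda>(k, k1). psi \<phi> k1 \<xi>1 * psi \<phi> k \<xi> / (\<xi>^3 - \<xi>1^2 + (\<xi> - \<xi>1)^2))"
  define h where "h = (\<lambda>(k, k1). 4 / D * (\<bar>psi \<phi> k1 \<xi>1\<bar> * \<bar>psi \<phi> k \<xi>\<bar>))"
  have "\<bar>\<xi>\<bar> * \<bar>Mmult \<phi> c \<xi> \<xi>1\<bar> = (1 / sqrt (2 * pi)) * \<bar>\<Sum>i\<in>nonres_indices \<phi> c \<xi> \<xi>1. \<xi> * g i\<bar>"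
    unfolding Mmult_eq_sum[OF phi] g_def[symmetric]
    by (simp add: abs_mult sum_distrib_left[symmetric])
  also have "\<dots> \<le> 1 * (\<Sum>i\<in>nonres_indices \<phi> c \<xi> \<xi>1. h i)"
  proof (rule mult_mono)
    show "1 / sqrt (2 * pi) \<le> 1"
      using pi_gt3 by simp
    have "\<bar>\<xi> * g i\<bar> \<le> h i" if "i \<in> nonres_indices \<phi> c \<xi> \<xi>1" for i
      using that abs_mult_nonres_term_le[OF phi c, of "fst i" "snd i"]
      by (cases i) (simp add: g_def h_def D_def)
    then show "\<bar>\<Sum>i\<in>nonres_indices \<phi> c \<xi> \<xi>1. \<xi> * g i\<bar> \<le> (\<Sum>i\<in>nonres_indices \<phi> c \<xi> \<xi>1. h i)"
      by (intro order_trans[OF sum_abs sum_mono])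
  qed (use D in \<open>auto simp: h_def intro!: sum_nonneg\<close>)
  also have "\<dots> \<le> (\<Sum>i\<in>psi_indices \<phi> \<xi> \<times> psi_indices \<phi> \<xi>1. h i)"
    unfolding mult_1 using finite_psi_indices[OF phi] D
    by (intro sum_mono2) (auto simp: nonres_indices_def h_def)
  also have "\<dots> = (\<Sum>k\<in>psi_indices \<phi> \<xi>. \<Sum>k1\<in>psi_indices \<phi> \<xi>1. 4 / D * (\<bar>psi \<phi> k \<xi>\<bar> * \<bar>psi \<phi> k1 \<xi>1\<bar>))"
    by (simp add: sum.cartesian_product h_def mult_ac)
  also have "\<dots> = 4 / D * (\<Sum>k\<in>psi_indices \<phi> \<xi>. \<Sum>k1\<in>psi_indices \<phi> \<xi>1. \<bar>psi \<phi> k \<xi>\<bar> * \<bar>psi \<phi> k1 \<xi>1\<bar>)"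
    by (simp add: sum_distrib_left)
  also have "\<dots> \<le> 4 / D * (16 * B^2)"
    using D by (intro mult_left_mono sum_abs_psi_times_le[OF phi B]) auto
  finally show ?thesis
    unfolding D_def by simp
qed

section \<open>Weight inequalities\<close>

lemma powr_le_one_of_nonpos: "1 \<le> x \<Longrightarrow> e \<le> 0 \<Longrightarrow> x powr e \<le> 1"
  for x e :: real
  using powr_mono[of e 0 x] by simp

lemma power2_powr: "0 < x \<Longrightarrow> (x^2) powr e = x powr (2 * e)"
  for x e :: real
  by (simp add: powr_powr flip: powr_numeral)

lemma powr_half_power2: "0 < x \<Longrightarrow> (x powr (e / 2))^2 = x powr e"
  for x e :: real
  by (simp add: powr_power)

lemma power2_divide_powr_neg: "0 < x \<Longrightarrow> 0 < k \<Longrightarrow> (x^2 / k) powr (- e) = k powr e * x powr (-2 * e)"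
  for x k e :: real
  by (simp add: powr_divide power2_powr powr_minus_divide)

lemma weight_ineq_of_le:
  fixes a b q X W :: real
  assumes qa: "a \<le> q" and bq: "b + q \<le> 2 * a + 2" and W: "1 \<le> W" and WX: "W \<le> X"
  shows "X powr (2 * b) * W powr (-2 * a) * X powr (-2 * a) / (X^2 + W)^2 \<le> W powr (-2 * q)"
proof -
  have X0: "0 < X" "0 < W"
    using W WX by auto
  have "X^4 = (X^2)^2"
    by (simp flip: power_mult)
  also have "\<dots> \<le> (X^2 + W)^2"
    using X0 by (intro power_mono) auto
  finally have "X powr (2 * b) * W powr (-2 * a) * X powr (-2 * a) / (X^2 + W)^2
      \<le> X powr (2 * b) * W powr (-2 * a) * X powr (-2 * a) / X^4"
    using X0 by (intro divide_left_mono) (auto intro!: mult_pos_pos add_pos_pos)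
  also have "\<dots> = X powr (2 * b - 2 * a - 4) * W powr (-2 * a)"
  proof -
    have "X powr (2 * b - 2 * a - 4) = X powr (2 * b + (-2 * a) - 4)"
      by simp
    also have "\<dots> = X powr (2 * b) * X powr (-2 * a) / X powr 4"
      by (simp only: powr_diff powr_add)
    finally show ?thesis
      using X0 by simp
  qed
  also have "\<dots> = X powr (2 * b - 2 * a - 4) * (W powr (-2 * q) * W powr (2 * q - 2 * a))"
    by (simp add: powr_add[symmetric])
  also have "\<dots> \<le> X powr (2 * b - 2 * a - 4) * (W powr (-2 * q) * X powr (2 * q - 2 * a))"
    using X0 WX qa by (intro mult_left_mono powr_mono2) auto
  also have "\<dots> = X powr (2 * b + 2 * q - 4 * a - 4) * W powr (-2 * q)"
  proof -
    have "X powr (2 * b - 2 * a - 4) * X powr (2 * q - 2 * a) = X powr (2 * b + 2 * q - 4 * a - 4)"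
      by (simp add: powr_add[symmetric] algebra_simps)
    then show ?thesis
      by (simp add: mult_ac)
  qed
  also have "\<dots> \<le> 1 * W powr (-2 * q)"
    using W WX bq by (intro mult_right_mono powr_le_one_of_nonpos) auto
  finally show ?thesis
    by simp
qed

lemma powr_le_mult_sq_of_le:
  fixes a b q X W :: real
  assumes a: "0 \<le> a" and bq: "b + q \<le> 2 * a + 2" and X: "1 \<le> X" and XW: "X \<le> W"
  shows "X powr (2 * b + 2 * q) \<le> W powr (4 * a) * (X^2 + W)^2"
proof -
  have X4: "X powr 4 \<le> (X^2 + W)^2"
  proof -
    have "X powr 4 = (X^2)^2"
      using X by (simp flip: power_mult)
    also have "\<dots> \<le> (X^2 + W)^2"
      using X XW by (intro power_mono) auto
    finally show ?thesis .
  qed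
  show ?thesis
  proof (cases "b + q \<le> 2")
    case True
    have "X powr (2 * b + 2 * q) \<le> X powr 4"
      using X True by (intro powr_mono) auto
    also have "\<dots> \<le> 1 * (X^2 + W)^2"
      using X4 by simp
    also have "\<dots> \<le> W powr (4 * a) * (X^2 + W)^2"
      using X XW a ge_one_powr_ge_zero[of W "4 * a"] by (intro mult_right_mono) auto
    finally show ?thesis .
  next
    case False
    have "X powr (2 * b + 2 * q) = X powr (4 + (2 * b + 2 * q - 4))"
      by simp
    also have "\<dots> = X powr 4 * X powr (2 * b + 2 * q - 4)"
      by (simp only: powr_add)
    also have "\<dots> \<le> (X^2 + W)^2 * W powr (2 * b + 2 * q - 4)"
      using X XW False X4 by (intro mult_mono powr_mono2) auto
    also have "\<dots> \<le> (X^2 + W)^2 * W powr (4 * a)"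
      using X XW bq by (intro mult_left_mono powr_mono) auto
    finally show ?thesis
      by (simp add: mult.commute)
  qed
qed

lemma weight_ineq_of_ge:
  fixes a b q X W :: real
  assumes a: "0 \<le> a" and bq: "b + q \<le> 2 * a + 2" and X: "1 \<le> X" and XW: "X \<le> W"
  shows "X powr (2 * b) * W powr (-2 * a) * W powr (-2 * a) / (X^2 + W)^2 \<le> X powr (-2 * q)"
proof -
  have X0: "0 < X" "0 < W"
    using X XW by auto
  have "X powr (2 * b) * W powr (-2 * a) * W powr (-2 * a) / (X^2 + W)^2
      = X powr (-2 * q) * (X powr (2 * b + 2 * q) / (W powr (4 * a) * (X^2 + W)^2))"
  proof -
    have e1: "X powr (2 * b + 2 * q) = X powr (2 * b) * X powr (2 * q)"
      by (simp only: powr_add)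
    have e2: "W powr (-2 * a) * W powr (-2 * a) = 1 / W powr (4 * a)"
      by (simp add: powr_add[symmetric] powr_minus_divide)
    have e3: "X powr (-2 * q) = 1 / X powr (2 * q)"
      by (simp add: powr_minus_divide)
    have "0 < X powr (2 * q)" "0 < W powr (4 * a)"
      using X0 by auto
    then show ?thesis
      unfolding e1 e3 mult.assoc[of "X powr (2 * b)"] e2 by (simp add: field_simps)
  qed
  also have "\<dots> \<le> X powr (-2 * q) * 1"
    using powr_le_mult_sq_of_le[OF assms] X0 by (intro mult_left_mono) (auto simp: divide_le_eq_1)
  finally show ?thesis
    by simp
qed

lemma weight_ineq:
  fixes a b q X W :: real
  assumes a: "0 \<le> a" and qa: "a \<le> q" and bq: "b + q \<le> 2 * a + 2" and X: "1 \<le> X" and W: "1 \<le> W"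
  shows "X powr (2 * b) * W powr (-2 * a) * max X W powr (-2 * a) / (X^2 + W)^2
    \<le> X powr (-2 * q) + W powr (-2 * q)"
proof (cases "W \<le> X")
  case True
  then have "X powr (2 * b) * W powr (-2 * a) * max X W powr (-2 * a) / (X^2 + W)^2 \<le> W powr (-2 * q)"
    using weight_ineq_of_le[OF qa bq W True] by (simp add: max_absorb1)
  then show ?thesis
    using powr_ge_zero[of X "-2 * q"] by linarith
next
  case False
  then have "X powr (2 * b) * W powr (-2 * a) * max X W powr (-2 * a) / (X^2 + W)^2 \<le> X powr (-2 * q)"
    using weight_ineq_of_ge[OF a bq X] by (simp add: max_absorb2)
  then show ?thesis
    using powr_ge_zero[of W "-2 * q"] by linarith
qed

lemma one_plus_abs_sq_le: "(1 + \<bar>t\<bar>)^2 \<le> 2 * (1 + t^2)"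
  for t :: real
proof -
  have "0 \<le> (\<bar>t\<bar> - 1)^2"
    by simp
  then show ?thesis
    by (simp add: power2_eq_square algebra_simps)
qed

lemma one_plus_sq_le: "1 + t^2 \<le> (1 + \<bar>t\<bar>)^2"
  for t :: real
  by (simp add: power2_eq_square algebra_simps)

lemma one_plus_sq_powr_le:
  fixes b x :: real
  assumes "0 \<le> b"
  shows "(1 + x^2) powr b \<le> (1 + \<bar>x\<bar>) powr (2 * b)"
proof -
  have "(1 + x^2) powr b \<le> ((1 + \<bar>x\<bar>)^2) powr b"
    using one_plus_sq_le[of x] assms by (intro powr_mono2) (auto intro: add_nonneg_nonneg)
  then show ?thesis
    by (simp add: power2_powr add_pos_nonneg)
qed

lemma one_plus_abs_powr_neg_le:
  fixes q x :: real
  assumes "0 \<le> q"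
  shows "(1 + \<bar>x\<bar>) powr (-2 * q) \<le> (1 + x^2) powr (-q)"
proof -
  have "((1 + \<bar>x\<bar>)^2) powr (-q) \<le> (1 + x^2) powr (-q)"
    using one_plus_sq_le[of x] assms by (intro powr_mono2') (auto intro: add_pos_nonneg)
  then show ?thesis
    by (simp add: power2_powr add_pos_nonneg)
qed

lemma one_plus_sq_powr_neg_le:
  fixes a k M v :: real
  assumes "0 \<le> a" "0 < M" "0 < k" "M^2 \<le> k * (1 + v^2)"
  shows "(1 + v^2) powr (-a) \<le> k powr a * M powr (-2 * a)"
proof -
  have "(1 + v^2) powr (-a) \<le> (M^2 / k) powr (-a)"
    using assms by (intro powr_mono2') (auto simp: field_simps)
  also have "\<dots> = k powr a * M powr (-2 * a)"
    using assms by (intro power2_divide_powr_neg) auto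
  finally show ?thesis .
qed

lemma inverse_sq_le_weight:
  fixes x u d :: real
  assumes d: "\<bar>u\<bar> \<le> d"
  shows "1 / (1 + x^2 + d)^2 \<le> 9 / ((1 + \<bar>x\<bar>)^2 + (1 + \<bar>u\<bar>))^2"
proof -
  define X where "X = 1 + \<bar>x\<bar>"
  define W where "W = 1 + \<bar>u\<bar>"
  have "X^2 \<le> 2 * (1 + x^2)" "W \<le> 1 + d"
    using one_plus_abs_sq_le[of x] d unfolding X_def W_def by auto
  then have "X^2 + W \<le> 3 * (1 + x^2 + d)"
    using d abs_ge_zero[of u] zero_le_power2[of x] by argo
  then have "(X^2 + W)^2 \<le> (3 * (1 + x^2 + d))^2"
    unfolding X_def W_def by (intro power_mono) auto
  also have "\<dots> = 9 * (1 + x^2 + d)^2"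
    by (simp only: power_mult_distrib) simp
  finally have "(X^2 + W)^2 \<le> 9 * (1 + x^2 + d)^2" .
  moreover have "0 < (X^2 + W)^2"
    unfolding X_def W_def by (intro zero_less_power) (auto intro: add_pos_pos)
  moreover have "0 < 1 + x^2 + d"
    using d abs_ge_zero[of u] zero_le_power2[of x] by argo
  ultimately show ?thesis
    unfolding X_def[symmetric] W_def[symmetric] by (simp add: field_simps)
qed

lemma kernel_weight_le:
  fixes a b q x u v d :: real
  assumes a: "0 \<le> a" and b: "0 \<le> b" and qa: "a \<le> q" and bq: "b + q \<le> 2 * a + 2"
    and uv: "\<bar>u\<bar> \<le> \<bar>v\<bar>" and xuv: "\<bar>x\<bar> \<le> \<bar>u\<bar> + \<bar>v\<bar>" and d: "\<bar>u\<bar> \<le> d"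
  shows "(1 + x^2) powr b / ((1 + u^2) powr a * (1 + v^2) powr a * (1 + x^2 + d)^2)
         \<le> 9 * 16 powr a * ((1 + x^2) powr (-q) + (1 + u^2) powr (-q))"
proof -
  define X where "X = 1 + \<bar>x\<bar>"
  define W where "W = 1 + \<bar>u\<bar>"
  define V where "V = 1 + \<bar>v\<bar>"
  define M where "M = max X W"
  have X1: "1 \<le> X" "1 \<le> W" "1 \<le> M"
    unfolding X_def W_def M_def by auto
  have f1: "(1 + x^2) powr b \<le> X powr (2 * b)"
    unfolding X_def using b by (rule one_plus_sq_powr_le)
  have f2: "(1 + u^2) powr (-a) \<le> 2 powr a * W powr (-2 * a)"
    using a X1 one_plus_abs_sq_le[of u] unfolding W_def by (intro one_plus_sq_powr_neg_le) auto
  have f3: "(1 + v^2) powr (-a) \<le> 8 powr a * M powr (-2 * a)"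
  proof (rule one_plus_sq_powr_neg_le)
    have "M \<le> 2 * V"
      using uv xuv unfolding M_def X_def W_def V_def by auto
    then have "M^2 \<le> 4 * V^2"
      using power_mono[of M "2 * V" 2] X1 by (simp add: power_mult_distrib)
    then show "M^2 \<le> 8 * (1 + v^2)"
      using one_plus_abs_sq_le[of v, folded V_def] by linarith
  qed (use a X1 in auto)
  have f4: "1 / (1 + x^2 + d)^2 \<le> 9 / (X^2 + W)^2"
    unfolding X_def W_def by (rule inverse_sq_le_weight[OF d])
  have f5: "X powr (-2 * q) \<le> (1 + x^2) powr (-q)" "W powr (-2 * q) \<le> (1 + u^2) powr (-q)"
    using one_plus_abs_powr_neg_le[of q x] one_plus_abs_powr_neg_le[of q u] a qa
    unfolding X_def W_def by auto
  have main: "X powr (2 * b) * W powr (-2 * a) * M powr (-2 * a) / (X^2 + W)^2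
      \<le> X powr (-2 * q) + W powr (-2 * q)"
    unfolding M_def by (rule weight_ineq[OF a qa bq X1(1,2)])
  have "(1 + x^2) powr b / ((1 + u^2) powr a * (1 + v^2) powr a * (1 + x^2 + d)^2)
      = (1 + x^2) powr b * (1 + u^2) powr (-a) * (1 + v^2) powr (-a) * (1 / (1 + x^2 + d)^2)"
    by (simp add: powr_minus_divide)
  also have "\<dots> \<le> X powr (2 * b) * (2 powr a * W powr (-2 * a)) * (8 powr a * M powr (-2 * a))
      * (9 / (X^2 + W)^2)"
    by (intro mult_mono f1 f2 f3 f4) auto
  also have "\<dots> = 9 * (2 powr a * 8 powr a) * (X powr (2 * b) * W powr (-2 * a) * M powr (-2 * a) / (X^2 + W)^2)"
    by (simp add: field_simps)
  also have "2 powr a * 8 powr a = 16 powr a"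
    by (simp add: powr_mult[symmetric])
  also have "9 * 16 powr a * (X powr (2 * b) * W powr (-2 * a) * M powr (-2 * a) / (X^2 + W)^2)
      \<le> 9 * 16 powr a * ((1 + x^2) powr (-q) + (1 + u^2) powr (-q))"
    using main f5 by (intro mult_left_mono) auto
  finally show ?thesis .
qed

lemma one_plus_sq_powr_neg_le_abs:
  fixes q x :: real
  assumes "0 \<le> q" "1 < \<bar>x\<bar>"
  shows "(1 + x^2) powr (-q) \<le> \<bar>x\<bar> powr (-2 * q)"
proof -
  have "(1 + x^2) powr (-q) \<le> (\<bar>x\<bar>^2) powr (-q)"
    using assms by (intro powr_mono2') auto
  also have "\<dots> = \<bar>x\<bar> powr (2 * (-q))"
    using assms by (intro power2_powr) auto
  also have "\<dots> = \<bar>x\<bar> powr (-2 * q)"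
    by simp
  finally show ?thesis .
qed

lemma nn_integral_powr_neg_finite:
  fixes q :: real
  assumes q: "1/2 < q"
  shows "(\<integral>\<^sup>+x. ennreal ((1 + x^2) powr (-q)) \<partial>lborel) < \<infinity>"
proof -
  define e where "e = -2 * q"
  have e: "e < -1"
    using q e_def by simp
  define g where "g = (\<lambda>x::real. ennreal (x powr e) * indicator {1..} x)"
  have g[measurable]: "g \<in> borel_measurable borel"
    unfolding g_def by measurable
  have int_g: "(\<integral>\<^sup>+x. g x \<partial>lborel) = ennreal (-(1 powr (e + 1)) / (e + 1))"
    unfolding g_def
    by (rule nn_integral_has_integral_lebesgue'[OF _ has_integral_powr_to_inf[OF e]]) auto
  have int_g_reflect: "(\<integral>\<^sup>+x. g (-x) \<partial>lborel) = (\<integral>\<^sup>+x. g x \<partial>lborel)"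
    using nn_integral_real_affine[OF g, of "-1" 0] by simp
  have dominate: "ennreal ((1 + x^2) powr (-q)) \<le> indicator {-1..1} x + g x + g (-x)" for x :: real
  proof (cases "\<bar>x\<bar> \<le> 1")
    case True
    have "(1 + x^2) powr (-q) \<le> 1"
      using q by (intro powr_le_one_of_nonpos) auto
    then have "ennreal ((1 + x^2) powr (-q)) \<le> indicator {-1..1} x"
      using True by (auto simp: indicator_def)
    then show ?thesis
      by (rule order_trans) (simp add: add.assoc)
  next
    case False
    then have "ennreal ((1 + x^2) powr (-q)) \<le> g \<bar>x\<bar>"
      using one_plus_sq_powr_neg_le_abs[of q x] q unfolding g_def e_def by (auto intro: ennreal_leI)
    also have "g \<bar>x\<bar> \<le> g x + g (-x)"
      by (cases "0 \<le> x") (auto simp: add_increasing add_increasing2)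
    finally show ?thesis
      by (rule order_trans) (simp add: add.assoc add_increasing)
  qed
  have "(\<integral>\<^sup>+x. ennreal ((1 + x^2) powr (-q)) \<partial>lborel)
      \<le> (\<integral>\<^sup>+x. indicator {-1..1} x + g x + g (-x) \<partial>lborel)"
    by (intro nn_integral_mono dominate)
  also have "\<dots> = 2 + (\<integral>\<^sup>+x. g x \<partial>lborel) + (\<integral>\<^sup>+x. g (-x) \<partial>lborel)"
    by (subst nn_integral_add; simp add: nn_integral_add)
  also have "\<dots> < \<infinity>"
    using int_g int_g_reflect by (simp add: less_top[symmetric])
  finally show ?thesis .
qed

section \<open>A bilinear estimate\<close>

lemma nn_integral_lborel_shift:
  fixes f :: "real \<Rightarrow> ennreal"
  assumes "f \<in> borel_measurable borel"
  shows "(\<integral>\<^sup>+x. f (x + z) \<partial>lborel) = (\<integral>\<^sup>+x. f x \<partial>lborel)"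
  using nn_integral_real_affine[OF assms, of 1 z] by (simp add: add.commute)

lemma nn_integral_lborel_reflect:
  fixes f :: "real \<Rightarrow> ennreal"
  assumes "f \<in> borel_measurable borel"
  shows "(\<integral>\<^sup>+x. f (z - x) \<partial>lborel) = (\<integral>\<^sup>+x. f x \<partial>lborel)"
  using nn_integral_real_affine[OF assms, of "-1" z] by simp

lemma nn_integral_sq_mult_const:
  fixes u :: "'a \<Rightarrow> real"
  assumes "u \<in> borel_measurable M"
  shows "(\<integral>\<^sup>+x. ennreal ((u x * c)^2) \<partial>M) = ennreal (c^2) * (\<integral>\<^sup>+x. ennreal ((u x)^2) \<partial>M)"
proof -
  have "(\<integral>\<^sup>+x. ennreal ((u x * c)^2) \<partial>M) = (\<integral>\<^sup>+x. ennreal (c^2) * ennreal ((u x)^2) \<partial>M)"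
    by (intro nn_integral_cong) (simp add: ennreal_mult[symmetric] power_mult_distrib mult_ac)
  also have "\<dots> = ennreal (c^2) * (\<integral>\<^sup>+x. ennreal ((u x)^2) \<partial>M)"
    using assms by (intro nn_integral_cmult) measurable
  finally show ?thesis .
qed

lemma nn_integral_bilinear_sq_le_diag:
  fixes W :: "real \<Rightarrow> real \<Rightarrow> real" and f g :: "real \<Rightarrow> real"
  assumes [measurable]: "(\<lambda>(x, y). W x y) \<in> borel_measurable (lborel \<Otimes>\<^sub>M lborel)"
    "f \<in> borel_measurable borel" "g \<in> borel_measurable borel"
    and W0: "\<And>x y. 0 \<le> W x y" and f0: "\<And>t. 0 \<le> f t" and g0: "\<And>t. 0 \<le> g t"
    and W_bound: "\<And>z. (\<integral>\<^sup>+x. ennreal ((W x (x + z))^2) \<partial>lborel) \<le> A"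
  shows "(\<integral>\<^sup>+x. (\<integral>\<^sup>+y. ennreal (W x y * f y * g (y - x)) \<partial>lborel)^2 \<partial>lborel)
     \<le> A * (\<integral>\<^sup>+t. ennreal ((f t)^2) \<partial>lborel) * (\<integral>\<^sup>+t. ennreal ((g t)^2) \<partial>lborel)"
proof -
  define F where "F = (\<integral>\<^sup>+t. ennreal ((f t)^2) \<partial>lborel)"
  define G where "G = (\<integral>\<^sup>+t. ennreal ((g t)^2) \<partial>lborel)"
  have CS: "(\<integral>\<^sup>+y. ennreal (W x y * f y * g (y - x)) \<partial>lborel)^2
      \<le> F * (\<integral>\<^sup>+z. ennreal ((W x (x + z) * g z)^2) \<partial>lborel)" for x
  proof -
    have eq: "(\<integral>\<^sup>+y. ennreal (W x y * f y * g (y - x)) \<partial>lborel)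
        = (\<integral>\<^sup>+y. ennreal (f y) * ennreal (W x y * g (y - x)) \<partial>lborel)"
      using W0 f0 g0 by (intro nn_integral_cong) (simp add: ennreal_mult[symmetric] mult_ac)
    have "(\<integral>\<^sup>+y. ennreal (f y) * ennreal (W x y * g (y - x)) \<partial>lborel)^2
        \<le> (\<integral>\<^sup>+y. ennreal (f y)^2 \<partial>lborel) * (\<integral>\<^sup>+y. ennreal (W x y * g (y - x))^2 \<partial>lborel)"
      by (rule Cauchy_Schwarz_nn_integral) measurable
    also have "\<dots> = F * (\<integral>\<^sup>+y. ennreal ((W x y * g (y - x))^2) \<partial>lborel)"
      using f0 W0 g0 by (simp add: F_def ennreal_power)
    also have "(\<integral>\<^sup>+y. ennreal ((W x y * g (y - x))^2) \<partial>lborel)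
        = (\<integral>\<^sup>+z. ennreal ((W x (x + z) * g z)^2) \<partial>lborel)"
      using nn_integral_lborel_shift[of "\<lambda>y. ennreal ((W x y * g (y - x))^2)" x]
      by (simp add: add.commute)
    finally show ?thesis
      unfolding eq .
  qed
  have inner: "(\<integral>\<^sup>+x. (\<integral>\<^sup>+z. ennreal ((W x (x + z) * g z)^2) \<partial>lborel) \<partial>lborel) \<le> G * A"
  proof -
    have "(\<integral>\<^sup>+x. (\<integral>\<^sup>+z. ennreal ((W x (x + z) * g z)^2) \<partial>lborel) \<partial>lborel)
        = (\<integral>\<^sup>+z. (\<integral>\<^sup>+x. ennreal ((W x (x + z) * g z)^2) \<partial>lborel) \<partial>lborel)"
      by (rule lborel_pair.Fubini'[symmetric]) measurable
    also have "\<dots> = (\<integral>\<^sup>+z. ennreal ((g z)^2) * (\<integral>\<^sup>+x. ennreal ((W x (x + z))^2) \<partial>lborel) \<partial>lborel)"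
      by (intro nn_integral_cong nn_integral_sq_mult_const) measurable
    also have "\<dots> \<le> (\<integral>\<^sup>+z. ennreal ((g z)^2) * A \<partial>lborel)"
      by (intro nn_integral_mono mult_left_mono W_bound) auto
    also have "\<dots> = G * A"
      unfolding G_def by (rule nn_integral_multc) measurable
    finally show ?thesis .
  qed
  have "(\<integral>\<^sup>+x. (\<integral>\<^sup>+y. ennreal (W x y * f y * g (y - x)) \<partial>lborel)^2 \<partial>lborel)
      \<le> (\<integral>\<^sup>+x. F * (\<integral>\<^sup>+z. ennreal ((W x (x + z) * g z)^2) \<partial>lborel) \<partial>lborel)"
    by (intro nn_integral_mono CS)
  also have "\<dots> = F * (\<integral>\<^sup>+x. (\<integral>\<^sup>+z. ennreal ((W x (x + z) * g z)^2) \<partial>lborel) \<partial>lborel)"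
    by (rule nn_integral_cmult) measurable
  also have "\<dots> \<le> F * (G * A)"
    by (intro mult_left_mono inner) simp
  also have "\<dots> = A * F * G"
    by (simp add: mult_ac)
  finally show ?thesis
    unfolding F_def G_def .
qed

lemma nn_integral_bilinear_sq_le_col:
  fixes W :: "real \<Rightarrow> real \<Rightarrow> real" and f g :: "real \<Rightarrow> real"
  assumes [measurable]: "(\<lambda>(x, y). W x y) \<in> borel_measurable (lborel \<Otimes>\<^sub>M lborel)"
    "f \<in> borel_measurable borel" "g \<in> borel_measurable borel"
    and W0: "\<And>x y. 0 \<le> W x y" and f0: "\<And>t. 0 \<le> f t" and g0: "\<And>t. 0 \<le> g t"
    and W_bound: "\<And>y. (\<integral>\<^sup>+x. ennreal ((W x y)^2) \<partial>lborel) \<le> A"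
  shows "(\<integral>\<^sup>+x. (\<integral>\<^sup>+y. ennreal (W x y * f y * g (y - x)) \<partial>lborel)^2 \<partial>lborel)
     \<le> A * (\<integral>\<^sup>+t. ennreal ((f t)^2) \<partial>lborel) * (\<integral>\<^sup>+t. ennreal ((g t)^2) \<partial>lborel)"
proof -
  define F where "F = (\<integral>\<^sup>+t. ennreal ((f t)^2) \<partial>lborel)"
  define G where "G = (\<integral>\<^sup>+t. ennreal ((g t)^2) \<partial>lborel)"
  have CS: "(\<integral>\<^sup>+y. ennreal (W x y * f y * g (y - x)) \<partial>lborel)^2
      \<le> (\<integral>\<^sup>+y. ennreal ((W x y * f y)^2) \<partial>lborel) * G" for x
  proof -
    have eq: "(\<integral>\<^sup>+y. ennreal (W x y * f y * g (y - x)) \<partial>lborel)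
        = (\<integral>\<^sup>+y. ennreal (W x y * f y) * ennreal (g (y - x)) \<partial>lborel)"
      using W0 f0 g0 by (intro nn_integral_cong) (simp add: ennreal_mult[symmetric])
    have "(\<integral>\<^sup>+y. ennreal (W x y * f y) * ennreal (g (y - x)) \<partial>lborel)^2
        \<le> (\<integral>\<^sup>+y. ennreal (W x y * f y)^2 \<partial>lborel) * (\<integral>\<^sup>+y. ennreal (g (y - x))^2 \<partial>lborel)"
      by (rule Cauchy_Schwarz_nn_integral) measurable
    also have "\<dots> = (\<integral>\<^sup>+y. ennreal ((W x y * f y)^2) \<partial>lborel) * (\<integral>\<^sup>+y. ennreal ((g (y - x))^2) \<partial>lborel)"
      using f0 W0 g0 by (simp add: ennreal_power)
    also have "(\<integral>\<^sup>+y. ennreal ((g (y - x))^2) \<partial>lborel) = G"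
      using nn_integral_lborel_shift[of "\<lambda>t. ennreal ((g t)^2)" "-x"] by (simp add: G_def)
    finally show ?thesis
      unfolding eq .
  qed
  have inner: "(\<integral>\<^sup>+x. (\<integral>\<^sup>+y. ennreal ((W x y * f y)^2) \<partial>lborel) \<partial>lborel) \<le> F * A"
  proof -
    have "(\<integral>\<^sup>+x. (\<integral>\<^sup>+y. ennreal ((W x y * f y)^2) \<partial>lborel) \<partial>lborel)
        = (\<integral>\<^sup>+y. (\<integral>\<^sup>+x. ennreal ((W x y * f y)^2) \<partial>lborel) \<partial>lborel)"
      by (rule lborel_pair.Fubini'[symmetric]) measurable
    also have "\<dots> = (\<integral>\<^sup>+y. ennreal ((f y)^2) * (\<integral>\<^sup>+x. ennreal ((W x y)^2) \<partial>lborel) \<partial>lborel)"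
      by (intro nn_integral_cong nn_integral_sq_mult_const) measurable
    also have "\<dots> \<le> (\<integral>\<^sup>+y. ennreal ((f y)^2) * A \<partial>lborel)"
      by (intro nn_integral_mono mult_left_mono W_bound) auto
    also have "\<dots> = F * A"
      unfolding F_def by (rule nn_integral_multc) measurable
    finally show ?thesis .
  qed
  have "(\<integral>\<^sup>+x. (\<integral>\<^sup>+y. ennreal (W x y * f y * g (y - x)) \<partial>lborel)^2 \<partial>lborel)
      \<le> (\<integral>\<^sup>+x. (\<integral>\<^sup>+y. ennreal ((W x y * f y)^2) \<partial>lborel) * G \<partial>lborel)"
    by (intro nn_integral_mono CS)
  also have "\<dots> = (\<integral>\<^sup>+x. (\<integral>\<^sup>+y. ennreal ((W x y * f y)^2) \<partial>lborel) \<partial>lborel) * G"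
    by (rule nn_integral_multc) measurable
  also have "\<dots> \<le> F * A * G"
    by (intro mult_right_mono inner) simp
  also have "\<dots> = A * F * G"
    by (simp add: mult_ac)
  finally show ?thesis
    unfolding F_def G_def .
qed

lemma ennreal_sq_add_le: "(P + Q)^2 \<le> 2 * P^2 + 2 * Q^2"
  for P Q :: ennreal
proof -
  have "(P + Q)^2 = P^2 + Q^2 + 2 * P * Q"
    by (simp add: power2_sum)
  also have "\<dots> \<le> P^2 + Q^2 + (P^2 + Q^2)"
    using sum_of_squares_ge_ennreal[of P Q] by (intro add_left_mono)
  also have "\<dots> = 2 * P^2 + 2 * Q^2"
    by (simp only: mult_2 ac_simps)
  finally show ?thesis .
qed

lemma measurable_bilinear_integrand:
  fixes W :: "real \<Rightarrow> real \<Rightarrow> real" and f :: "real \<Rightarrow> real"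
  assumes [measurable]: "(\<lambda>(x, y). W x y) \<in> borel_measurable (lborel \<Otimes>\<^sub>M lborel)"
    "f \<in> borel_measurable borel"
  shows "(\<lambda>y. ennreal (W x y * f y * f (y - x))) \<in> borel_measurable lborel"
  by measurable

lemma measurable_bilinear_integral:
  fixes W :: "real \<Rightarrow> real \<Rightarrow> real" and f :: "real \<Rightarrow> real"
  assumes [measurable]: "(\<lambda>(x, y). W x y) \<in> borel_measurable (lborel \<Otimes>\<^sub>M lborel)"
    "f \<in> borel_measurable borel"
  shows "(\<lambda>x. \<integral>\<^sup>+y. ennreal (W x y * f y * f (y - x)) \<partial>lborel) \<in> borel_measurable lborel"
  by measurable

lemma nn_integral_bilinear_sq_le_sum:
  fixes K V W :: "real \<Rightarrow> real \<Rightarrow> real" and f :: "real \<Rightarrow> real"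
  assumes V: "(\<lambda>(x, y). V x y) \<in> borel_measurable (lborel \<Otimes>\<^sub>M lborel)"
    and W: "(\<lambda>(x, y). W x y) \<in> borel_measurable (lborel \<Otimes>\<^sub>M lborel)"
    and f: "f \<in> borel_measurable borel"
    and K: "\<And>x y. K x y = V x y + W x y"
    and V0: "\<And>x y. 0 \<le> V x y" and W0: "\<And>x y. 0 \<le> W x y" and f0: "\<And>t. 0 \<le> f t"
    and V_bound: "\<And>z. (\<integral>\<^sup>+x. ennreal ((V x (x + z))^2) \<partial>lborel) \<le> A"
    and W_bound: "\<And>y. (\<integral>\<^sup>+x. ennreal ((W x y)^2) \<partial>lborel) \<le> A"
  shows "(\<integral>\<^sup>+x. (\<integral>\<^sup>+y. ennreal (K x y * f y * f (y - x)) \<partial>lborel)^2 \<partial>lborel)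
    \<le> 4 * A * (\<integral>\<^sup>+t. ennreal ((f t)^2) \<partial>lborel)^2"
proof -
  define F where "F = (\<integral>\<^sup>+t. ennreal ((f t)^2) \<partial>lborel)"
  define P where "P x = (\<integral>\<^sup>+y. ennreal (V x y * f y * f (y - x)) \<partial>lborel)" for x
  define Q where "Q x = (\<integral>\<^sup>+y. ennreal (W x y * f y * f (y - x)) \<partial>lborel)" for x
  have [measurable]: "P \<in> borel_measurable lborel" "Q \<in> borel_measurable lborel"
    unfolding P_def Q_def
    by (rule measurable_bilinear_integral[OF V f], rule measurable_bilinear_integral[OF W f])
  have split: "(\<integral>\<^sup>+y. ennreal (K x y * f y * f (y - x)) \<partial>lborel) = P x + Q x" for x
  proof -
    have "(\<integral>\<^sup>+y. ennreal (K x y * f y * f (y - x)) \<partial>lborel)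
        = (\<integral>\<^sup>+y. ennreal (V x y * f y * f (y - x)) + ennreal (W x y * f y * f (y - x)) \<partial>lborel)"
      using V0 W0 f0 by (intro nn_integral_cong) (simp add: K distrib_right ennreal_plus)
    also have "\<dots> = P x + Q x"
      unfolding P_def Q_def
      by (rule nn_integral_add[OF measurable_bilinear_integrand[OF V f]
            measurable_bilinear_integrand[OF W f]])
    finally show ?thesis .
  qed
  have "(\<integral>\<^sup>+x. (\<integral>\<^sup>+y. ennreal (K x y * f y * f (y - x)) \<partial>lborel)^2 \<partial>lborel)
      \<le> (\<integral>\<^sup>+x. 2 * (P x)^2 + 2 * (Q x)^2 \<partial>lborel)"
    unfolding split by (intro nn_integral_mono ennreal_sq_add_le)
  also have "\<dots> = 2 * (\<integral>\<^sup>+x. (P x)^2 \<partial>lborel) + 2 * (\<integral>\<^sup>+x. (Q x)^2 \<partial>lborel)"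
    by (simp add: nn_integral_add nn_integral_cmult)
  also have "\<dots> \<le> 2 * (A * F * F) + 2 * (A * F * F)"
    unfolding P_def Q_def F_def
    by (intro add_mono mult_left_mono nn_integral_bilinear_sq_le_diag[OF V f f V0 f0 f0 V_bound]
        nn_integral_bilinear_sq_le_col[OF W f f W0 f0 f0 W_bound]) simp_all
  also have "\<dots> = 4 * A * F^2"
  proof -
    have double: "2 * X + 2 * X = 4 * X" for X :: ennreal
      by (metis distrib_right numeral_Bit0)
    show ?thesis
      unfolding double by (simp add: power2_eq_square mult_ac)
  qed
  finally show ?thesis
    unfolding F_def .
qed

(* The kernel left once the H^a weights of both inputs of B are divided out. *)
definition bilinear_kernel :: "real \<Rightarrow> real \<Rightarrow> real \<Rightarrow> real \<Rightarrow> real" where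
  "bilinear_kernel a b x y = (1 + x^2) powr (b / 2) /
     ((1 + y^2) powr (a / 2) * (1 + (y - x)^2) powr (a / 2) * (1 + x^2 + \<bar>y\<bar>))"

lemma measurable_bilinear_kernel [measurable (raw)]:
  fixes f g :: "'a \<Rightarrow> real"
  assumes [measurable]: "f \<in> borel_measurable M" "g \<in> borel_measurable M"
  shows "(\<lambda>t. bilinear_kernel a b (f t) (g t)) \<in> borel_measurable M"
  unfolding bilinear_kernel_def by measurable

lemma bilinear_kernel_nonneg: "0 \<le> bilinear_kernel a b x y"
  unfolding bilinear_kernel_def by simp

lemma bilinear_kernel_sq:
  "(bilinear_kernel a b x y)^2
     = (1 + x^2) powr b / ((1 + y^2) powr a * (1 + (y - x)^2) powr a * (1 + x^2 + \<bar>y\<bar>)^2)"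
proof -
  have "0 < 1 + t^2" for t :: real
    by (simp add: add_pos_nonneg)
  then show ?thesis
    unfolding bilinear_kernel_def by (simp add: power_divide power_mult_distrib powr_half_power2)
qed

lemma bilinear_kernel_sq_le_low:
  assumes "0 \<le> a" "0 \<le> b" "a \<le> q" "b + q \<le> 2 * a + 2" and "\<bar>y\<bar> \<le> \<bar>y - x\<bar>"
  shows "(bilinear_kernel a b x y)^2 \<le> 9 * 16 powr a * ((1 + x^2) powr (-q) + (1 + y^2) powr (-q))"
proof -
  have "\<bar>x\<bar> \<le> \<bar>y\<bar> + \<bar>y - x\<bar>"
    by arith
  then show ?thesis
    using kernel_weight_le[OF assms(1-4), of y "y - x" x "\<bar>y\<bar>"] assms(5)
    by (simp add: bilinear_kernel_sq)
qed

lemma bilinear_kernel_sq_le_high: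
  assumes "0 \<le> a" "0 \<le> b" "a \<le> q" "b + q \<le> 2 * a + 2" and "\<bar>y - x\<bar> \<le> \<bar>y\<bar>"
  shows "(bilinear_kernel a b x y)^2 \<le> 9 * 16 powr a * ((1 + x^2) powr (-q) + (1 + (y - x)^2) powr (-q))"
proof -
  have "\<bar>x\<bar> \<le> \<bar>y - x\<bar> + \<bar>y\<bar>"
    by arith
  then show ?thesis
    using kernel_weight_le[OF assms(1-4), of "y - x" y x "\<bar>y\<bar>"] assms(5)
    by (simp add: bilinear_kernel_sq mult_ac)
qed

(* Split by which input frequency, y or y - x, is the lower one: the squared pieces are then
   integrable in x along the lines y = x + z and y = const respectively. *)
definition kernel_low :: "real \<Rightarrow> real \<Rightarrow> real \<Rightarrow> real \<Rightarrow> real" where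
  "kernel_low a b x y = (if \<bar>y\<bar> \<le> \<bar>y - x\<bar> then bilinear_kernel a b x y else 0)"

definition kernel_high :: "real \<Rightarrow> real \<Rightarrow> real \<Rightarrow> real \<Rightarrow> real" where
  "kernel_high a b x y = (if \<bar>y\<bar> \<le> \<bar>y - x\<bar> then 0 else bilinear_kernel a b x y)"

lemma bilinear_kernel_split: "bilinear_kernel a b x y = kernel_low a b x y + kernel_high a b x y"
  by (simp add: kernel_low_def kernel_high_def)

lemma kernel_low_nonneg: "0 \<le> kernel_low a b x y"
  by (simp add: kernel_low_def bilinear_kernel_nonneg)

lemma kernel_high_nonneg: "0 \<le> kernel_high a b x y"
  by (simp add: kernel_high_def bilinear_kernel_nonneg)

lemma nn_integral_kernel_low_sq_le:
  assumes "0 \<le> a" "0 \<le> b" "a \<le> q" "b + q \<le> 2 * a + 2"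
  shows "(\<integral>\<^sup>+x. ennreal ((kernel_low a b x (x + z))^2) \<partial>lborel)
    \<le> ennreal (9 * 16 powr a) * (2 * (\<integral>\<^sup>+x. ennreal ((1 + x^2) powr (-q)) \<partial>lborel))"
proof -
  define K where "K = 9 * 16 powr a"
  define h where "h x = ennreal ((1 + x^2) powr (-q))" for x :: real
  have [measurable]: "h \<in> borel_measurable borel"
    unfolding h_def by measurable
  have "(kernel_low a b x (x + z))^2 \<le> K * ((1 + x^2) powr (-q) + (1 + (x + z)^2) powr (-q))" for x
    using bilinear_kernel_sq_le_low[OF assms, of "x + z" x] by (simp add: kernel_low_def K_def)
  moreover have "ennreal K * (h x + h (x + z)) = ennreal (K * ((1 + x^2) powr (-q) + (1 + (x + z)^2) powr (-q)))" for x
    by (simp add: K_def h_def ennreal_mult ennreal_plus)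
  ultimately have "(\<integral>\<^sup>+x. ennreal ((kernel_low a b x (x + z))^2) \<partial>lborel)
      \<le> (\<integral>\<^sup>+x. ennreal K * (h x + h (x + z)) \<partial>lborel)"
    by (intro nn_integral_mono) (simp add: ennreal_leI)
  also have "\<dots> = ennreal K * ((\<integral>\<^sup>+x. h x \<partial>lborel) + (\<integral>\<^sup>+x. h x \<partial>lborel))"
    using nn_integral_lborel_shift[of h z] by (simp add: nn_integral_cmult nn_integral_add)
  finally show ?thesis
    by (simp add: K_def h_def mult_2)
qed

lemma nn_integral_kernel_high_sq_le:
  assumes "0 \<le> a" "0 \<le> b" "a \<le> q" "b + q \<le> 2 * a + 2"
  shows "(\<integral>\<^sup>+x. ennreal ((kernel_high a b x y)^2) \<partial>lborel)
    \<le> ennreal (9 * 16 powr a) * (2 * (\<integral>\<^sup>+x. ennreal ((1 + x^2) powr (-q)) \<partial>lborel))"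
proof -
  define K where "K = 9 * 16 powr a"
  define h where "h x = ennreal ((1 + x^2) powr (-q))" for x :: real
  have [measurable]: "h \<in> borel_measurable borel"
    unfolding h_def by measurable
  have "(kernel_high a b x y)^2 \<le> K * ((1 + x^2) powr (-q) + (1 + (y - x)^2) powr (-q))" for x
    using bilinear_kernel_sq_le_high[OF assms, of y x] by (simp add: kernel_high_def K_def)
  moreover have "ennreal K * (h x + h (y - x)) = ennreal (K * ((1 + x^2) powr (-q) + (1 + (y - x)^2) powr (-q)))" for x
    by (simp add: K_def h_def ennreal_mult ennreal_plus)
  ultimately have "(\<integral>\<^sup>+x. ennreal ((kernel_high a b x y)^2) \<partial>lborel)
      \<le> (\<integral>\<^sup>+x. ennreal K * (h x + h (y - x)) \<partial>lborel)"
    by (intro nn_integral_mono) (simp add: ennreal_leI)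
  also have "\<dots> = ennreal K * ((\<integral>\<^sup>+x. h x \<partial>lborel) + (\<integral>\<^sup>+x. h x \<partial>lborel))"
    using nn_integral_lborel_reflect[of h y] by (simp add: nn_integral_cmult nn_integral_add)
  finally show ?thesis
    by (simp add: K_def h_def mult_2)
qed

lemma bilinear_kernel_estimate:
  fixes f :: "real \<Rightarrow> real"
  assumes a: "0 \<le> a" and b: "0 \<le> b" and qa: "a \<le> q" and bq: "b + q \<le> 2 * a + 2"
    and f: "f \<in> borel_measurable borel" and f0: "\<And>t. 0 \<le> f t"
  shows "(\<integral>\<^sup>+x. (\<integral>\<^sup>+y. ennreal (bilinear_kernel a b x y * f y * f (y - x)) \<partial>lborel)^2 \<partial>lborel)
     \<le> 8 * ennreal (9 * 16 powr a) * (\<integral>\<^sup>+x. ennreal ((1 + x^2) powr (-q)) \<partial>lborel)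
         * (\<integral>\<^sup>+t. ennreal ((f t)^2) \<partial>lborel)^2"
proof -
  have low: "(\<lambda>(x, y). kernel_low a b x y) \<in> borel_measurable (lborel \<Otimes>\<^sub>M lborel)"
    unfolding kernel_low_def by measurable
  have high: "(\<lambda>(x, y). kernel_high a b x y) \<in> borel_measurable (lborel \<Otimes>\<^sub>M lborel)"
    unfolding kernel_high_def by measurable
  have "(\<integral>\<^sup>+x. (\<integral>\<^sup>+y. ennreal (bilinear_kernel a b x y * f y * f (y - x)) \<partial>lborel)^2 \<partial>lborel)
      \<le> 4 * (ennreal (9 * 16 powr a) * (2 * (\<integral>\<^sup>+x. ennreal ((1 + x^2) powr (-q)) \<partial>lborel)))
         * (\<integral>\<^sup>+t. ennreal ((f t)^2) \<partial>lborel)^2"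
    by (rule nn_integral_bilinear_sq_le_sum[where K = "bilinear_kernel a b" and V = "kernel_low a b"
          and W = "kernel_high a b", OF low high f bilinear_kernel_split kernel_low_nonneg
          kernel_high_nonneg f0 nn_integral_kernel_low_sq_le[OF a b qa bq]
          nn_integral_kernel_high_sq_le[OF a b qa bq]])
  then show ?thesis
    by (simp add: mult_ac)
qed

section \<open>The estimate for B\<close>

definition Hs_density :: "real \<Rightarrow> (real \<Rightarrow> complex) \<Rightarrow> real \<Rightarrow> real" where
  "Hs_density s v t = (1 + t^2) powr (s / 2) * cmod (v t)"

lemma Hs_density_nonneg: "0 \<le> Hs_density s v t"
  by (simp add: Hs_density_def)

lemma Hs_sq_eq_density: "Hs_sq s v = (\<integral>\<^sup>+t. ennreal ((Hs_density s v t)^2) \<partial>lborel)"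
proof -
  have "0 < 1 + t^2" for t :: real
    by (simp add: add_pos_nonneg)
  then show ?thesis
    unfolding Hs_sq_def Hs_density_def by (simp add: power_mult_distrib powr_half_power2)
qed

lemma Hs_sq_mono: "s \<le> s' \<Longrightarrow> Hs_sq s v \<le> Hs_sq s' v"
  unfolding Hs_sq_def by (intro nn_integral_mono ennreal_leI mult_right_mono powr_mono) auto

lemma borel_measurable_cnj [measurable (raw)]:
  fixes f :: "'a \<Rightarrow> complex"
  assumes "f \<in> borel_measurable M"
  shows "(\<lambda>x. cnj (f x)) \<in> borel_measurable M"
  using measurable_compose[OF assms borel_measurable_continuous_onI[OF continuous_on_cnj[OF continuous_on_id]]]
  by simp

lemma Bhat_borel_measurable:
  assumes "phi_ok \<phi>" and [measurable]: "v \<in> borel_measurable lborel"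
  shows "Bhat \<phi> c v \<in> borel_measurable lborel"
proof -
  have [measurable]: "v \<in> borel_measurable borel"
    by simp
  show ?thesis
    unfolding Bhat_def using assms(1) by measurable
qed

lemma norm_Bhat_le:
  assumes phi: "phi_ok \<phi>" and B: "\<And>x. \<bar>\<phi> x\<bar> \<le> B" and c: "6 \<le> c"
    and [measurable]: "v \<in> borel_measurable lborel"
  shows "ennreal (cmod (Bhat \<phi> c v \<xi>))
    \<le> (\<integral>\<^sup>+\<eta>. ennreal (64 * B^2 / (1 + \<xi>^2 + \<bar>\<eta>\<bar>) * cmod (v \<eta>) * cmod (v (\<eta> - \<xi>))) \<partial>lborel)"
proof -
  define h where "h \<eta> = complex_of_real (Mmult \<phi> c \<xi> \<eta>) * v \<eta> * cnj (v (\<eta> - \<xi>))" for \<eta>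
  have [measurable]: "v \<in> borel_measurable borel"
    by simp
  have [measurable]: "h \<in> borel_measurable lborel"
    unfolding h_def using phi by measurable
  have eq: "cmod (Bhat \<phi> c v \<xi>) = \<bar>\<xi>\<bar> * cmod (integral\<^sup>L lborel h)"
    unfolding Bhat_def h_def by (simp add: norm_mult)
  have pointwise: "ennreal \<bar>\<xi>\<bar> * ennreal (cmod (h \<eta>))
      \<le> ennreal (64 * B^2 / (1 + \<xi>^2 + \<bar>\<eta>\<bar>) * cmod (v \<eta>) * cmod (v (\<eta> - \<xi>)))" for \<eta>
  proof -
    have "\<bar>\<xi>\<bar> * cmod (h \<eta>) = (\<bar>\<xi>\<bar> * \<bar>Mmult \<phi> c \<xi> \<eta>\<bar>) * (cmod (v \<eta>) * cmod (v (\<eta> - \<xi>)))"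
      unfolding h_def by (simp add: norm_mult mult_ac)
    also have "\<dots> \<le> 64 * B^2 / (1 + \<xi>^2 + \<bar>\<eta>\<bar>) * (cmod (v \<eta>) * cmod (v (\<eta> - \<xi>)))"
      by (intro mult_right_mono abs_mult_Mmult_le[OF phi B c]) auto
    finally show ?thesis
      by (simp add: ennreal_mult[symmetric] ennreal_leI mult_ac)
  qed
  show ?thesis
  proof (cases "integrable lborel h")
    case True
    have "ennreal (cmod (Bhat \<phi> c v \<xi>)) = ennreal \<bar>\<xi>\<bar> * ennreal (cmod (integral\<^sup>L lborel h))"
      unfolding eq by (simp add: ennreal_mult)
    also have "\<dots> \<le> ennreal \<bar>\<xi>\<bar> * (\<integral>\<^sup>+\<eta>. ennreal (cmod (h \<eta>)) \<partial>lborel)"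
      using integral_norm_bound_ennreal[OF True] by (intro mult_left_mono) auto
    also have "\<dots> = (\<integral>\<^sup>+\<eta>. ennreal \<bar>\<xi>\<bar> * ennreal (cmod (h \<eta>)) \<partial>lborel)"
      by (rule nn_integral_cmult[symmetric]) measurable
    also have "\<dots> \<le> (\<integral>\<^sup>+\<eta>. ennreal (64 * B^2 / (1 + \<xi>^2 + \<bar>\<eta>\<bar>) * cmod (v \<eta>) * cmod (v (\<eta> - \<xi>))) \<partial>lborel)"
      by (intro nn_integral_mono pointwise)
    finally show ?thesis .
  next
    case False
    then show ?thesis
      unfolding eq by (simp add: not_integrable_integral_eq)
  qed
qed

lemma ennreal_mult_bilinear_kernel_Hs_density:
  assumes "0 \<le> C"
  shows "ennreal ((1 + \<xi>^2) powr (b / 2)) * ennreal (C / (1 + \<xi>^2 + \<bar>\<eta>\<bar>) * cmod (v \<eta>) * cmod (v (\<eta> - \<xi>)))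
    = ennreal C * ennreal (bilinear_kernel a b \<xi> \<eta> * Hs_density a v \<eta> * Hs_density a v (\<eta> - \<xi>))"
    (is "ennreal ?S * ennreal ?X = ennreal C * ennreal ?Y")
proof -
  have cancel: "S * (C / D * x * y) = C * (S / (P1 * P2 * D) * (P1 * x) * (P2 * y))"
    if "P1 \<noteq> 0" "P2 \<noteq> 0" for S C D x y P1 P2 :: real
    using that by (simp add: field_simps)
  have pos: "0 < 1 + t^2" for t :: real
    by (simp add: add_pos_nonneg)
  have "0 < 1 + \<xi>^2 + \<bar>\<eta>\<bar>"
    by (simp add: add_pos_nonneg)
  then have "ennreal ?S * ennreal ?X = ennreal (?S * ?X)"
    using assms by (intro ennreal_mult[symmetric]) simp_all
  also have "?S * ?X = C * ?Y"
    unfolding bilinear_kernel_def Hs_density_def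
    by (rule cancel) (use pos[of \<eta>] pos[of "\<eta> - \<xi>"] in auto)
  also have "ennreal (C * ?Y) = ennreal C * ennreal ?Y"
    using assms by (intro ennreal_mult) (simp_all add: bilinear_kernel_nonneg Hs_density_nonneg)
  finally show ?thesis .
qed

lemma weighted_norm_Bhat_le:
  assumes phi: "phi_ok \<phi>" and B: "\<And>x. \<bar>\<phi> x\<bar> \<le> B" and c: "6 \<le> c"
    and [measurable]: "v \<in> borel_measurable lborel"
  shows "ennreal ((1 + \<xi>^2) powr b * (cmod (Bhat \<phi> c v \<xi>))^2)
    \<le> ennreal ((64 * B^2)^2) *
       (\<integral>\<^sup>+\<eta>. ennreal (bilinear_kernel a b \<xi> \<eta> * Hs_density a v \<eta> * Hs_density a v (\<eta> - \<xi>)) \<partial>lborel)^2"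
proof -
  define S where "S = (1 + \<xi>^2) powr (b / 2)"
  have pos: "0 < 1 + t^2" for t :: real
    by (simp add: add_pos_nonneg)
  have [measurable]: "v \<in> borel_measurable borel"
    by simp
  have [measurable]: "Hs_density a v \<in> borel_measurable borel"
    unfolding Hs_density_def by measurable
  have "ennreal ((1 + \<xi>^2) powr b * (cmod (Bhat \<phi> c v \<xi>))^2) = (ennreal S * ennreal (cmod (Bhat \<phi> c v \<xi>)))^2"
    using pos by (simp add: S_def ennreal_mult[symmetric] ennreal_power power_mult_distrib powr_half_power2)
  also have "\<dots> \<le> (ennreal S * (\<integral>\<^sup>+\<eta>. ennreal (64 * B^2 / (1 + \<xi>^2 + \<bar>\<eta>\<bar>) * cmod (v \<eta>) * cmod (v (\<eta> - \<xi>))) \<partial>lborel))^2"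
    by (intro power_mono mult_left_mono norm_Bhat_le[OF phi B c]) auto
  also have "ennreal S * (\<integral>\<^sup>+\<eta>. ennreal (64 * B^2 / (1 + \<xi>^2 + \<bar>\<eta>\<bar>) * cmod (v \<eta>) * cmod (v (\<eta> - \<xi>))) \<partial>lborel)
      = (\<integral>\<^sup>+\<eta>. ennreal S * ennreal (64 * B^2 / (1 + \<xi>^2 + \<bar>\<eta>\<bar>) * cmod (v \<eta>) * cmod (v (\<eta> - \<xi>))) \<partial>lborel)"
    by (rule nn_integral_cmult[symmetric]) measurable
  also have "\<dots> = (\<integral>\<^sup>+\<eta>. ennreal (64 * B^2) *
      ennreal (bilinear_kernel a b \<xi> \<eta> * Hs_density a v \<eta> * Hs_density a v (\<eta> - \<xi>)) \<partial>lborel)"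
    unfolding S_def by (intro nn_integral_cong ennreal_mult_bilinear_kernel_Hs_density) simp
  also have "\<dots> = ennreal (64 * B^2) *
      (\<integral>\<^sup>+\<eta>. ennreal (bilinear_kernel a b \<xi> \<eta> * Hs_density a v \<eta> * Hs_density a v (\<eta> - \<xi>)) \<partial>lborel)"
    by (rule nn_integral_cmult) measurable
  finally show ?thesis
    by (simp add: power_mult_distrib ennreal_power)
qed

lemma Hs_sq_Bhat_le:
  assumes phi: "phi_ok \<phi>" and B: "\<And>x. \<bar>\<phi> x\<bar> \<le> B" and c: "6 \<le> c"
    and a: "0 \<le> a" and b: "0 \<le> b" and qa: "a \<le> q" and bq: "b + q \<le> 2 * a + 2"
    and v: "v \<in> borel_measurable lborel"
  shows "Hs_sq b (Bhat \<phi> c v)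
    \<le> ennreal ((64 * B^2)^2) * (8 * ennreal (9 * 16 powr a) *
         (\<integral>\<^sup>+x. ennreal ((1 + x^2) powr (-q)) \<partial>lborel)) * (Hs_sq a v)^2"
proof -
  have [measurable]: "v \<in> borel_measurable borel"
    using v by simp
  have density[measurable]: "Hs_density a v \<in> borel_measurable borel"
    unfolding Hs_density_def by measurable
  have "Hs_sq b (Bhat \<phi> c v) \<le> (\<integral>\<^sup>+\<xi>. ennreal ((64 * B^2)^2) *
      (\<integral>\<^sup>+\<eta>. ennreal (bilinear_kernel a b \<xi> \<eta> * Hs_density a v \<eta> * Hs_density a v (\<eta> - \<xi>)) \<partial>lborel)^2 \<partial>lborel)"
    unfolding Hs_sq_def by (intro nn_integral_mono weighted_norm_Bhat_le[OF phi B c v])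
  also have "\<dots> = ennreal ((64 * B^2)^2) * (\<integral>\<^sup>+\<xi>.
      (\<integral>\<^sup>+\<eta>. ennreal (bilinear_kernel a b \<xi> \<eta> * Hs_density a v \<eta> * Hs_density a v (\<eta> - \<xi>)) \<partial>lborel)^2 \<partial>lborel)"
    by (rule nn_integral_cmult) measurable
  also have "\<dots> \<le> ennreal ((64 * B^2)^2) * (8 * ennreal (9 * 16 powr a) *
      (\<integral>\<^sup>+x. ennreal ((1 + x^2) powr (-q)) \<partial>lborel) * (Hs_sq a v)^2)"
    unfolding Hs_sq_eq_density
    by (rule mult_left_mono[OF bilinear_kernel_estimate[OF a b qa bq density Hs_density_nonneg]]) simp
  finally show ?thesis
    by (simp add: mult_ac)
qed

lemma Hs_sq_Bhat_bounded:
  assumes phi: "phi_ok \<phi>" and c: "6 \<le> c" and a: "0 \<le> a" and b: "0 \<le> b" and qa: "a \<le> q"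
    and bq: "b + q \<le> 2 * a + 2" and q: "1/2 < q"
  obtains K where "\<And>v. v \<in> borel_measurable lborel \<Longrightarrow> Hs_sq b (Bhat \<phi> c v) \<le> ennreal K * (Hs_sq a v)^2"
proof -
  obtain B where B: "\<And>x. \<bar>\<phi> x\<bar> \<le> B"
    using phi_ok_bounded[OF phi] by blast
  define I where "I = (\<integral>\<^sup>+x. ennreal ((1 + x^2) powr (-q)) \<partial>lborel)"
  obtain r where r: "I = ennreal r" "0 \<le> r"
    using nn_integral_powr_neg_finite[OF q] unfolding I_def[symmetric]
    by (cases I rule: ennreal_cases) auto
  define K0 where "K0 = (64 * B^2)^2"
  define Kc where "Kc = 9 * 16 powr a"
  have K: "0 \<le> K0" "0 \<le> Kc"
    by (simp_all add: K0_def Kc_def)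
  show thesis
  proof (rule that)
    fix v :: "real \<Rightarrow> complex"
    assume v: "v \<in> borel_measurable lborel"
    have "Hs_sq b (Bhat \<phi> c v) \<le> ennreal K0 * (8 * ennreal Kc * I) * (Hs_sq a v)^2"
      unfolding I_def K0_def Kc_def by (rule Hs_sq_Bhat_le[OF phi B c a b qa bq v])
    also have "\<dots> = ennreal (K0 * 8 * Kc * r) * (Hs_sq a v)^2"
      using r K by (simp add: ennreal_mult mult_ac)
    finally show "Hs_sq b (Bhat \<phi> c v) \<le> ennreal (K0 * 8 * Kc * r) * (Hs_sq a v)^2" .
  qed
qed

lemma exists_weight_exponent:
  fixes s1 s2 :: real
  assumes "0 \<le> s1" "s2 \<le> s1 + 2" "s2 < 2 * s1 + 3/2"
  obtains q where "s1 \<le> q" "max s2 0 + q \<le> 2 * s1 + 2" "1/2 < q"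
proof -
  define q where "q = max s1 ((2 * s1 - max s2 0 + 5/2) / 2)"
  show thesis
    by (rule that[of q]) (use assms in \<open>auto simp: q_def max_def field_simps\<close>)
qed

theorem lemma5p4:
  shows "\<exists>C0::nat. \<forall>c\<ge>C0. \<forall>\<phi> (s1::real) (s2::real).
     phi_ok \<phi> \<and> s1 \<ge> 0 \<and> s2 \<le> s1 + 2 \<and> s2 < 2 * s1 + 3 / 2 \<longrightarrow>
     (\<exists>K::real. \<forall>v::real \<Rightarrow> complex.
        v \<in> borel_measurable lborel \<and> Hs_sq s1 v < \<infinity> \<longrightarrow>
        Bhat \<phi> c v \<in> borel_measurable lborel \<and>
        Hs_sq s2 (Bhat \<phi> c v) \<le> ennreal K * (Hs_sq s1 v)\<^sup>2)"
proof (intro exI[of _ "6::nat"] allI impI)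
  fix c :: nat and \<phi> :: "real \<Rightarrow> real" and s1 s2 :: real
  assume c: "6 \<le> c" and H: "phi_ok \<phi> \<and> s1 \<ge> 0 \<and> s2 \<le> s1 + 2 \<and> s2 < 2 * s1 + 3 / 2"
  then have phi: "phi_ok \<phi>" and s1: "0 \<le> s1" and b: "0 \<le> max s2 0"
    by simp_all
  obtain q where q: "s1 \<le> q" "max s2 0 + q \<le> 2 * s1 + 2" "1/2 < q"
    using exists_weight_exponent[of s1 s2] H by blast
  obtain K where K: "\<And>v. v \<in> borel_measurable lborel \<Longrightarrow>
      Hs_sq (max s2 0) (Bhat \<phi> c v) \<le> ennreal K * (Hs_sq s1 v)^2"
    using Hs_sq_Bhat_bounded[OF phi c s1 b q] by blast
  show "\<exists>K::real. \<forall>v::real \<Rightarrow> complex.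
      v \<in> borel_measurable lborel \<and> Hs_sq s1 v < \<infinity> \<longrightarrow>
      Bhat \<phi> c v \<in> borel_measurable lborel \<and> Hs_sq s2 (Bhat \<phi> c v) \<le> ennreal K * (Hs_sq s1 v)\<^sup>2"
  proof (intro exI[of _ K] allI impI conjI)
    fix v :: "real \<Rightarrow> complex"
    (* The estimate holds in [0, \<infinity>]. *)
    assume "v \<in> borel_measurable lborel \<and> Hs_sq s1 v < \<infinity>"
    then have v: "v \<in> borel_measurable lborel"
      by simp
    show "Bhat \<phi> c v \<in> borel_measurable lborel"
      by (rule Bhat_borel_measurable[OF phi v])
    show "Hs_sq s2 (Bhat \<phi> c v) \<le> ennreal K * (Hs_sq s1 v)\<^sup>2"
      by (rule order_trans[OF Hs_sq_mono[OF max.cobounded1] K[OF v]])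
  qed
qed

end
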